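(* Let $U=f+g$ satisfy assumption (H1), assume that $g$ is Lipschitz, and assume $0<\int_{\mathbb{R}^d}e^{-U(x)}\,dx<\infty$. Let $\pi(x)=e^{-U(x)}/\int e^{-U}$ and, for $\lambda>0$, $\pi^\lambda(x)=e^{-U^\lambda(x)}/\int e^{-U^\lambda}$. Then for all $\lambda>0$, $$\|\pi^\lambda-\pi\|_{TV}\le\lambda\,\|g\|_{\mathrm{Lip}}^2 .$$
   Context: Assumption (H1): $U=f+g$ where $f:\mathbb{R}^d\to\mathbb{R}$ and $g:\mathbb{R}^d\to(-\infty,+\infty]$ are both bounded from below; $f$ is convex, continuously differentiable, and $\nabla f$ is $L_f$-Lipschitz; $g$ is proper, convex and lower semicontinuous. For $\lambda>0$, $g^\lambda(x)=\min_{y\in\mathbb{R}^d}\{g(y)+(2\lambda)^{-1}\|x-y\|^2\}$ and $U^\lambda=f+g^\lambda$. For a Lipschitz function $g$, $\|g\|_{\mathrm{Lip}}=\sup\{|g(x)-g(y)|/\|x-y\|: x\ne y\}$ is its smallest Lipschitz constant. $\|\mu-\nu\|_{TV}=\sup\{|\int h\,d\mu-\int h\,d\nu|: h\text{ Borel},\ \sup|h|\le1\}$, which for densities equals $\int|\mu(x)-\nu(x)|\,dx$. *)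

theory Defs
  imports "HOL-Analysis.Analysis"
begin

definition moreau_env :: "real \<Rightarrow> ('a::real_normed_vector \<Rightarrow> real) \<Rightarrow> 'a \<Rightarrow> real" where
  "moreau_env lam g x = (INF y. g y + (norm (x - y))\<^sup>2 / (2 * lam))"

definition lsc :: "('a::topological_space \<Rightarrow> real) \<Rightarrow> bool" where
  "lsc g \<longleftrightarrow> (\<forall>c. closed {x. g x \<le> c})"

definition lip_const :: "('a::metric_space \<Rightarrow> real) \<Rightarrow> real" where
  "lip_const g = (SUP p \<in> {(x, y). x \<noteq> y}. \<bar>g (fst p) - g (snd p)\<bar> / dist (fst p) (snd p))"

definition gibbs_density :: "('a::euclidean_space \<Rightarrow> real) \<Rightarrow> 'a \<Rightarrow> real" where
  "gibbs_density V x = exp (- V x) / (\<integral>z. exp (- V z) \<partial>lborel)"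

definition tv_dist :: "('a::euclidean_space \<Rightarrow> real) \<Rightarrow> ('a \<Rightarrow> real) \<Rightarrow> real" where
  "tv_dist p q = (\<integral>x. \<bar>p x - q x\<bar> \<partial>lborel)"

end

theory Submission
  imports Defs
begin

text \<open>
  If \<open>g\<close> is \<open>L\<close>-Lipschitz then \<open>g - \<lambda> L\<^sup>2/2 \<le> g\<^sup>\<lambda> \<le> g\<close>, because
  \<open>g y + t\<^sup>2/(2\<lambda>) \<ge> g x - L t + t\<^sup>2/(2\<lambda>) \<ge> g x - \<lambda> L\<^sup>2/2\<close> for \<open>t = \<parallel>x - y\<parallel>\<close>.
  Hence the unnormalised densities satisfy \<open>a \<le> b \<le> e\<^sup>c a\<close> with \<open>a = exp (-U)\<close>,
  \<open>b = exp (-U\<^sup>\<lambda>)\<close>, \<open>c = \<lambda> L\<^sup>2/2\<close>, and for such a pair the normalised densities are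
  at total variation distance at most \<open>2 (1 - \<integral>a / \<integral>b) \<le> 2 (1 - e\<^sup>-\<^sup>c) \<le> 2 c\<close>.
\<close>

lemma lip_const_lipschitz_on:
  fixes g :: "'a::{metric_space, perfect_space} \<Rightarrow> real"
  assumes "L-lipschitz_on UNIV g"
  shows "(lip_const g)-lipschitz_on UNIV g"
proof -
  let ?q = "\<lambda>p. \<bar>g (fst p) - g (snd p)\<bar> / dist (fst p) (snd p)"
  have "bdd_above (?q ` {(x, y). x \<noteq> y})"
  proof (rule bdd_aboveI)
    fix t assume "t \<in> ?q ` {(x, y). x \<noteq> y}"
    then obtain x y where "x \<noteq> y" "t = \<bar>g x - g y\<bar> / dist x y" by auto
    with lipschitz_onD[OF assms, of x y] show "t \<le> L"
      by (simp add: divide_le_eq dist_real_def)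
  qed
  then have quotient_le: "\<bar>g x - g y\<bar> / dist x y \<le> lip_const g" if "x \<noteq> y" for x y
    unfolding lip_const_def by (rule cSUP_upper2[of _ _ "(x, y)"]) (use that in auto)
  show ?thesis
  proof (rule lipschitz_onI)
    fix x y :: 'a
    show "dist (g x) (g y) \<le> lip_const g * dist x y"
      using quotient_le[of x y] by (cases "x = y") (auto simp: divide_le_eq dist_real_def mult.commute)
  next
    obtain x y :: 'a where "x \<noteq> y" using UNIV_not_singleton by blast
    have "0 \<le> \<bar>g x - g y\<bar> / dist x y" by simp
    also have "\<dots> \<le> lip_const g" using quotient_le[OF \<open>x \<noteq> y\<close>] .
    finally show "0 \<le> lip_const g" .
  qed
qed

lemma bdd_below_moreau_objective:
  fixes g :: "'a::real_normed_vector \<Rightarrow> real"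
  assumes "bdd_below (range g)" and "0 < lam"
  shows "bdd_below (range (\<lambda>y. g y + (norm (x - y))\<^sup>2 / (2 * lam)))"
proof -
  obtain B where "\<And>y. B \<le> g y" using assms(1) unfolding bdd_below_def by auto
  moreover have "\<And>y. 0 \<le> (norm (x - y))\<^sup>2 / (2 * lam)" using assms(2) by simp
  ultimately show ?thesis by (intro bdd_belowI2[of _ B]) (meson add_increasing2)
qed

lemma moreau_env_le:
  fixes g :: "'a::real_normed_vector \<Rightarrow> real"
  assumes "bdd_below (range g)" and "0 < lam"
  shows "moreau_env lam g x \<le> g x"
  unfolding moreau_env_def
  by (rule cINF_lower2[OF bdd_below_moreau_objective[OF assms], of x]) auto

lemma moreau_env_ge:
  fixes g :: "'a::real_normed_vector \<Rightarrow> real"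
  assumes "L-lipschitz_on UNIV g" and "0 < lam"
  shows "g x - lam * L\<^sup>2 / 2 \<le> moreau_env lam g x"
  unfolding moreau_env_def
proof (rule cINF_greatest)
  fix y
  define t where "t = norm (x - y)"
  have "g x - g y \<le> L * t"
    using lipschitz_onD[OF assms(1), of x y] by (simp add: t_def dist_norm dist_real_def)
  moreover have "0 \<le> (t - lam * L)\<^sup>2 / (2 * lam)" using assms(2) by simp
  moreover have "(t - lam * L)\<^sup>2 / (2 * lam) = t\<^sup>2 / (2 * lam) - L * t + lam * L\<^sup>2 / 2"
    using assms(2) by (simp add: field_simps power2_eq_square)
  ultimately show "g x - lam * L\<^sup>2 / 2 \<le> g y + (norm (x - y))\<^sup>2 / (2 * lam)"
    unfolding t_def[symmetric] by linarith
qed auto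

text \<open>Shifting the minimiser by \<open>x' - x\<close> transfers the Lipschitz bound of \<open>g\<close> to its envelope.\<close>
lemma moreau_env_lipschitz_on:
  fixes g :: "'a::real_normed_vector \<Rightarrow> real"
  assumes "bdd_below (range g)" and "L-lipschitz_on UNIV g" and "0 < lam"
  shows "L-lipschitz_on UNIV (moreau_env lam g)"
proof -
  have one_sided: "moreau_env lam g x \<le> moreau_env lam g x' + L * dist x x'" for x x'
  proof -
    have "moreau_env lam g x - L * dist x x' \<le> moreau_env lam g x'"
      unfolding moreau_env_def
    proof (rule cINF_greatest)
      fix y
      have "(INF y. g y + (norm (x - y))\<^sup>2 / (2 * lam))
          \<le> g (y + (x - x')) + (norm (x - (y + (x - x'))))\<^sup>2 / (2 * lam)"
        by (rule cINF_lower[OF bdd_below_moreau_objective[OF assms(1,3)]]) auto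
      also have "norm (x - (y + (x - x'))) = norm (x' - y)" by (simp add: algebra_simps)
      also have "g (y + (x - x')) \<le> g y + L * dist x x'"
        using lipschitz_onD[OF assms(2), of "y + (x - x')" y] by (simp add: dist_norm dist_real_def)
      finally show "(INF y. g y + (norm (x - y))\<^sup>2 / (2 * lam)) - L * dist x x'
          \<le> g y + (norm (x' - y))\<^sup>2 / (2 * lam)" by linarith
    qed auto
    then show ?thesis by linarith
  qed
  show ?thesis
  proof (rule lipschitz_onI)
    fix x y
    show "dist (moreau_env lam g x) (moreau_env lam g y) \<le> L * dist x y"
      using one_sided[of x y] one_sided[of y x] by (simp add: dist_real_def dist_commute abs_le_iff)
  qed (rule lipschitz_on_nonneg[OF assms(2)])
qed

text \<open>
  Pointwise, \<open>\<bar>p - q\<bar> = (p - q) + 2 (q - p)\<^sup>+\<close> and \<open>q - p \<le> a (1/\<integral>a - 1/\<integral>b)\<close>;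
  the term \<open>p - q\<close> integrates to zero.
\<close>
lemma integral_abs_normalized_diff_le:
  fixes a b :: "'a \<Rightarrow> real"
  assumes a_int: "integrable M a" and b_int: "integrable M b"
    and a_nonneg: "\<And>x. 0 \<le> a x" and a_le_b: "\<And>x. a x \<le> b x"
    and a_pos: "0 < integral\<^sup>L M a"
  shows "(\<integral>x. \<bar>b x / integral\<^sup>L M b - a x / integral\<^sup>L M a\<bar> \<partial>M)
         \<le> 2 * (1 - integral\<^sup>L M a / integral\<^sup>L M b)"
proof -
  define Za Zb where "Za = integral\<^sup>L M a" and "Zb = integral\<^sup>L M b"
  have "Za \<le> Zb" unfolding Za_def Zb_def by (rule integral_mono[OF a_int b_int a_le_b])
  with a_pos have Zpos: "0 < Za" "0 < Zb" unfolding Za_def by auto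
  define p q where "p x = b x / Zb" and "q x = a x / Za" for x
  define k where "k = 1 / Za - 1 / Zb"
  have p_int: "integrable M p" and q_int: "integrable M q"
    unfolding p_def q_def using a_int b_int by simp_all
  have "integral\<^sup>L M p = 1" "integral\<^sup>L M q = 1"
    unfolding p_def q_def Za_def Zb_def using Zpos unfolding Za_def Zb_def by simp_all
  then have integral_diff_zero: "(\<integral>x. p x - q x \<partial>M) = 0"
    using Bochner_Integration.integral_diff[OF p_int q_int] by simp
  have "0 \<le> k" unfolding k_def using Zpos \<open>Za \<le> Zb\<close> by (simp add: frac_le)
  have pointwise: "\<bar>p x - q x\<bar> \<le> (p x - q x) + 2 * (k * a x)" for x
  proof -
    have "q x - p x \<le> a x / Za - a x / Zb"
      unfolding p_def q_def using a_le_b[of x] Zpos by (simp add: divide_right_mono)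
    also have "\<dots> = k * a x" unfolding k_def by (simp add: field_simps)
    finally show ?thesis using \<open>0 \<le> k\<close> a_nonneg[of x] by (smt (verit) mult_nonneg_nonneg)
  qed
  have "(\<integral>x. \<bar>p x - q x\<bar> \<partial>M) \<le> (\<integral>x. (p x - q x) + 2 * (k * a x) \<partial>M)"
    by (intro integral_mono pointwise integrable_abs Bochner_Integration.integrable_add
        Bochner_Integration.integrable_diff integrable_mult_right p_int q_int a_int)
  also have "\<dots> = 2 * (k * Za)"
    using integral_diff_zero unfolding Za_def
    by (subst Bochner_Integration.integral_add)
      (auto intro: Bochner_Integration.integrable_diff p_int q_int a_int)
  also have "k * Za = 1 - Za / Zb" unfolding k_def using Zpos by (simp add: field_simps)
  finally show ?thesis unfolding p_def q_def Za_def Zb_def .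
qed

lemma tv_dist_gibbs_density_le:
  fixes U W :: "'a::euclidean_space \<Rightarrow> real"
  assumes U_meas: "U \<in> borel_measurable borel" and W_meas: "W \<in> borel_measurable borel"
    and W_le_U: "\<And>x. W x \<le> U x" and U_le_W: "\<And>x. U x \<le> W x + c"
    and U_int: "integrable lborel (\<lambda>x. exp (- U x))"
    and U_pos: "0 < (\<integral>x. exp (- U x) \<partial>lborel)"
  shows "tv_dist (gibbs_density W) (gibbs_density U) \<le> 2 * c"
proof -
  define a b where "a x = exp (- U x)" and "b x = exp (- W x)" for x
  have a_le_b: "a x \<le> b x" for x unfolding a_def b_def using W_le_U[of x] by simp
  have b_le: "b x \<le> exp c * a x" for x
    unfolding a_def b_def exp_add[symmetric] using U_le_W[of x] by simp
  have "integrable lborel (\<lambda>x. exp c * a x)" using U_int unfolding a_def by simp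
  moreover have "b \<in> borel_measurable lborel" unfolding b_def using W_meas by measurable
  ultimately have b_int: "integrable lborel b"
    by (rule Bochner_Integration.integrable_bound) (auto simp: a_def b_def b_le[unfolded a_def b_def])
  have a_int: "integrable lborel a" and a_pos: "0 < integral\<^sup>L lborel a"
    using U_int U_pos unfolding a_def by simp_all
  have "integral\<^sup>L lborel b \<le> exp c * integral\<^sup>L lborel a"
    using integral_mono[OF b_int _ b_le] U_int unfolding a_def by simp
  then have "exp (- c) \<le> integral\<^sup>L lborel a / integral\<^sup>L lborel b"
    using a_pos integral_mono[OF a_int b_int a_le_b] by (simp add: exp_minus field_simps)
  then have "1 - integral\<^sup>L lborel a / integral\<^sup>L lborel b \<le> c"
    using exp_ge_add_one_self[of "- c"] by linarith
  moreover have "tv_dist (gibbs_density W) (gibbs_density U)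
      \<le> 2 * (1 - integral\<^sup>L lborel a / integral\<^sup>L lborel b)"
    using integral_abs_normalized_diff_le[OF a_int b_int _ a_le_b a_pos]
    unfolding tv_dist_def gibbs_density_def a_def b_def by simp
  ultimately show ?thesis by (smt (verit))
qed

theorem proposition1:
  fixes f g :: "'a::euclidean_space \<Rightarrow> real" and Df :: "'a \<Rightarrow> 'a" and Lf lam :: real
  assumes f_bdd: "bdd_below (range f)"
    and f_convex: "convex_on UNIV f"
    and f_grad: "\<And>x. (f has_derivative (\<lambda>h. Df x \<bullet> h)) (at x)"
    and f_grad_lip: "\<And>x y. norm (Df x - Df y) \<le> Lf * norm (x - y)"
    and g_bdd: "bdd_below (range g)"
    and g_convex: "convex_on UNIV g"
    and g_lsc: "lsc g"
    and g_lip: "\<exists>L. L-lipschitz_on UNIV g"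
    and int_fin: "integrable lborel (\<lambda>x. exp (- (f x + g x)))"
    and int_pos: "(\<integral>x. exp (- (f x + g x)) \<partial>lborel) > 0"
    and lam_pos: "lam > 0"
  shows "tv_dist (gibbs_density (\<lambda>x. f x + moreau_env lam g x))
                 (gibbs_density (\<lambda>x. f x + g x))
         \<le> lam * (lip_const g)\<^sup>2"
proof -
  define L where "L = lip_const g"
  have g_L: "L-lipschitz_on UNIV g"
    unfolding L_def using g_lip lip_const_lipschitz_on by blast
  have "continuous_on UNIV f"
    using f_grad has_derivative_continuous continuous_at_imp_continuous_on by blast
  moreover have "continuous_on UNIV g" "continuous_on UNIV (moreau_env lam g)"
    using g_L moreau_env_lipschitz_on[OF g_bdd g_L lam_pos] by (auto intro: lipschitz_on_continuous_on)
  ultimately have "(\<lambda>x. f x + g x) \<in> borel_measurable borel"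
    "(\<lambda>x. f x + moreau_env lam g x) \<in> borel_measurable borel"
    by (auto intro!: borel_measurable_continuous_onI continuous_intros)
  then have "tv_dist (gibbs_density (\<lambda>x. f x + moreau_env lam g x)) (gibbs_density (\<lambda>x. f x + g x))
      \<le> 2 * (lam * L\<^sup>2 / 2)"
    using moreau_env_le[OF g_bdd lam_pos] moreau_env_ge[OF g_L lam_pos] int_fin int_pos
    by (intro tv_dist_gibbs_density_le) (auto simp: add_mono algebra_simps)
  then show ?thesis unfolding L_def by simp
qed

end
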